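(* Let $G=(V,E)$ be a hypergraph, $k\ge2$ an integer, and $(Y_1,\dots,Y_p,W,Z)$ a partition of $V$ for some integer $p\ge 2k-2$. Then there exist distinct $i_1,\dots,i_{k-1}\in[p]$ such that \[2\,\mathrm{cost}\Bigl(Y_{i_1},\dots,Y_{i_{k-1}},V\setminus\textstyle\bigcup_{j=1}^{k-1}Y_{i_j}\Bigr)\le\mathrm{cost}(Y_1,\dots,Y_p,W,Z)+\alpha(Y_1,\dots,Y_p,W,Z)+\beta(Y_1,\dots,Y_p,Z).\]
   Context: A hypergraph $G=(V,E)$ has finite vertex set $V$ and finite multiset $E$ of hyperedges (subsets of $V$). For a partition of $V$ into non-empty parts, $\mathrm{cost}$ of the partition is the number of hyperedges meeting at least two parts. For a partition $(Y_1,\dots,Y_p,W,Z)$ of $V$: $\alpha(Y_1,\dots,Y_p,W,Z)$ is the number of hyperedges meeting $Z$ and meeting at least two of the sets $Y_1,\dots,Y_p,W$; $\beta(Y_1,\dots,Y_p,Z)$ is the number of hyperedges disjoint from $Z$ meeting at least two of $Y_1,\dots,Y_p$. *)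

theory Defs
  imports Main "HOL-Library.Multiset"
begin

definition is_partition :: "'a set \<Rightarrow> 'a set list \<Rightarrow> bool" where
  "is_partition V P \<longleftrightarrow>
     (\<forall>a < length P. P ! a \<noteq> {}) \<and>
     (\<forall>a < length P. \<forall>b < length P. a \<noteq> b \<longrightarrow> P ! a \<inter> P ! b = {}) \<and>
     \<Union>(set P) = V"

definition meets_two :: "'a set \<Rightarrow> 'a set list \<Rightarrow> bool" where
  "meets_two e P \<longleftrightarrow>
     (\<exists>a < length P. \<exists>b < length P. a \<noteq> b \<and> e \<inter> P ! a \<noteq> {} \<and> e \<inter> P ! b \<noteq> {})"

definition cost :: "'a set multiset \<Rightarrow> 'a set list \<Rightarrow> nat" where
  "cost E P = size (filter_mset (\<lambda>e. meets_two e P) E)"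

definition alpha :: "'a set multiset \<Rightarrow> 'a set list \<Rightarrow> 'a set \<Rightarrow> 'a set \<Rightarrow> nat" where
  "alpha E Ys W Z = size (filter_mset (\<lambda>e. e \<inter> Z \<noteq> {} \<and> meets_two e (Ys @ [W])) E)"

definition beta :: "'a set multiset \<Rightarrow> 'a set list \<Rightarrow> 'a set \<Rightarrow> nat" where
  "beta E Ys Z = size (filter_mset (\<lambda>e. e \<inter> Z = {} \<and> meets_two e Ys) E)"

end

theory Submission
  imports Defs "HOL-Library.Disjoint_Sets"
begin

text \<open>Take the two disjoint selections \<open>Y\<^sub>1, \<dots>, Y\<^sub>k\<^sub>-\<^sub>1\<close> and
  \<open>Y\<^sub>k, \<dots>, Y\<^sub>2\<^sub>k\<^sub>-\<^sub>2\<close>. A hyperedge cut by the partition that cuts off either selection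
  from the rest of \<open>V\<close> is not contained in one of the selected parts, which it meets, so it is
  cut by the original partition. A hyperedge cut by both partitions meets two different parts
  \<open>Y\<^sub>i\<close>, so it is counted by \<open>\<alpha>\<close> or by \<open>\<beta>\<close>, depending on whether it meets \<open>Z\<close>. Summing over
  the hyperedges, the two costs add up to at most the right-hand side, and the cheaper selection
  has at most half of it.\<close>

definition cut_off :: "'a set \<Rightarrow> 'a set list \<Rightarrow> 'a set list" where
  "cut_off V Xs = Xs @ [V - \<Union>(set Xs)]"

lemma size_filter_mset_eq_sum_of_bool:
  "size (filter_mset P M) = (\<Sum>x\<in>#M. of_bool (P x))"
  by (induction M) auto

lemma meets_two_append: "meets_two e P \<Longrightarrow> meets_two e (P @ Q)"
  unfolding meets_two_def by (auto simp: nth_append)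

lemma meets_two_map_iff:
  assumes "distinct xs"
  shows "meets_two e (map f xs) \<longleftrightarrow>
           (\<exists>a\<in>set xs. \<exists>b\<in>set xs. a \<noteq> b \<and> e \<inter> f a \<noteq> {} \<and> e \<inter> f b \<noteq> {})"
proof
  assume "meets_two e (map f xs)"
  then obtain i j where "i < length xs" "j < length xs" "i \<noteq> j"
    "e \<inter> f (xs ! i) \<noteq> {}" "e \<inter> f (xs ! j) \<noteq> {}"
    unfolding meets_two_def by (metis length_map nth_map)
  with assms show "\<exists>a\<in>set xs. \<exists>b\<in>set xs. a \<noteq> b \<and> e \<inter> f a \<noteq> {} \<and> e \<inter> f b \<noteq> {}"
    by (metis nth_eq_iff_index_eq nth_mem)
next
  assume "\<exists>a\<in>set xs. \<exists>b\<in>set xs. a \<noteq> b \<and> e \<inter> f a \<noteq> {} \<and> e \<inter> f b \<noteq> {}"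
  then obtain i j where "i < length xs" "j < length xs" "xs ! i \<noteq> xs ! j"
    "e \<inter> f (xs ! i) \<noteq> {}" "e \<inter> f (xs ! j) \<noteq> {}"
    by (metis in_set_conv_nth)
  then show "meets_two e (map f xs)"
    unfolding meets_two_def by (metis length_map nth_map)
qed

lemma meets_two_if_not_subset_part:
  assumes "e \<subseteq> \<Union>(set P)" "X \<in> set P" "e \<inter> X \<noteq> {}" "\<not> e \<subseteq> X"
  shows "meets_two e P"
proof -
  obtain a where a: "a < length P" "P ! a = X"
    using assms(2) by (auto simp: in_set_conv_nth)
  obtain x where x: "x \<in> e" "x \<notin> X"
    using assms(4) by blast
  then obtain b where b: "b < length P" "x \<in> P ! b"
    using assms(1) by (metis UnionE in_set_conv_nth subsetD)
  have "a \<noteq> b"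
    using a b x by auto
  then show ?thesis
    unfolding meets_two_def using a b x assms(3) by blast
qed

lemma not_subset_part_if_meets_two:
  assumes "meets_two e P" "a < length P"
    and "\<And>b. b < length P \<Longrightarrow> b \<noteq> a \<Longrightarrow> P ! a \<inter> P ! b = {}"
  shows "\<not> e \<subseteq> P ! a"
proof -
  obtain b where "b < length P" "b \<noteq> a" "e \<inter> P ! b \<noteq> {}"
    using assms(1) unfolding meets_two_def by blast
  then show ?thesis
    using assms(3) by blast
qed

lemma disjoint_family_on_if_partition:
  assumes "is_partition V (map f xs @ Q)" "distinct xs"
  shows "disjoint_family_on f (set xs)"
unfolding disjoint_family_on_def
proof (intro ballI impI)
  fix a b assume "a \<in> set xs" "b \<in> set xs" "a \<noteq> b"
  then obtain i j where "i < length xs" "j < length xs" "i \<noteq> j" "xs ! i = a" "xs ! j = b"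
    by (metis in_set_conv_nth)
  moreover have "(map f xs @ Q) ! i \<inter> (map f xs @ Q) ! j = {}"
    using assms(1) \<open>i < length xs\<close> \<open>j < length xs\<close> \<open>i \<noteq> j\<close>
    unfolding is_partition_def by simp
  ultimately show "f a \<inter> f b = {}"
    by (simp add: nth_append)
qed

lemma meets_two_cut_off_imp_split:
  assumes "distinct js" "disjoint_family_on Y (set js)"
    and "meets_two e (cut_off V (map Y js))"
  shows "\<exists>j\<in>set js. e \<inter> Y j \<noteq> {} \<and> \<not> e \<subseteq> Y j"
proof -
  let ?P = "cut_off V (map Y js)"
  have len: "length ?P = Suc (length js)"
    by (simp add: cut_off_def)
  have nth_js: "?P ! a = Y (js ! a)" if "a < length js" for a
    using that by (simp add: cut_off_def nth_append)
  have nth_rest: "?P ! length js = V - (\<Union>j\<in>set js. Y j)"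
    by (simp add: cut_off_def nth_append)
  obtain a where a: "a < length js" "e \<inter> ?P ! a \<noteq> {}"
    using assms(3) unfolding meets_two_def len by (metis less_SucE)
  have "?P ! a \<inter> ?P ! b = {}" if "b < length ?P" "b \<noteq> a" for b
  proof (cases "b < length js")
    case True
    then have "js ! a \<noteq> js ! b"
      using a(1) that(2) assms(1) by (simp add: nth_eq_iff_index_eq)
    then show ?thesis
      using True a(1) assms(2) by (simp add: nth_js disjoint_family_onD)
  next
    case False
    then have "b = length js"
      using that(1) len by simp
    then show ?thesis
      using a(1) nth_rest nth_js by auto
  qed
  then have "\<not> e \<subseteq> ?P ! a"
    using not_subset_part_if_meets_two[OF assms(3)] a(1) len by simp
  then show ?thesis
    using a nth_js by (metis nth_mem)
qed

lemma cost_cut_off_pair_le: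
  fixes Y :: "nat \<Rightarrow> 'a set"
  assumes edges: "\<forall>e\<in>#E. e \<subseteq> V"
    and part: "is_partition V (map Y [1..<p+1] @ [W, Z])"
    and sel: "distinct js" "distinct js'" "set js \<subseteq> {1..p}" "set js' \<subseteq> {1..p}"
      "set js \<inter> set js' = {}"
  shows "cost E (cut_off V (map Y js)) + cost E (cut_off V (map Y js'))
           \<le> cost E (map Y [1..<p+1] @ [W, Z])
             + alpha E (map Y [1..<p+1]) W Z + beta E (map Y [1..<p+1]) Z"
proof -
  let ?P = "map Y [1..<p+1] @ [W, Z]"
  have disj: "disjoint_family_on Y {1..p}"
    using disjoint_family_on_if_partition[of V Y "[1..<p+1]" "[W, Z]"] part
    by (simp add: atLeastLessThanSuc_atLeastAtMost del: upt_Suc)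
  have split_by_part: "\<exists>j\<in>set ks. e \<inter> Y j \<noteq> {} \<and> \<not> e \<subseteq> Y j"
    if "distinct ks" "set ks \<subseteq> {1..p}" "meets_two e (cut_off V (map Y ks))" for e ks
    using meets_two_cut_off_imp_split[OF that(1) disjoint_family_on_mono[OF that(2) disj] that(3)] .
  have cut_imp_meets_two: "meets_two e ?P"
    if e: "e \<subseteq> V" and ks: "distinct ks" "set ks \<subseteq> {1..p}" "meets_two e (cut_off V (map Y ks))"
    for e ks
  proof -
    obtain j where j: "j \<in> set ks" "e \<inter> Y j \<noteq> {}" "\<not> e \<subseteq> Y j"
      using split_by_part[OF ks] by blast
    have "Y j \<in> set ?P"
      using j(1) ks(2) by (auto simp del: upt_Suc)
    moreover have "e \<subseteq> \<Union>(set ?P)"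
      using e part unfolding is_partition_def by simp
    ultimately show ?thesis
      using meets_two_if_not_subset_part j(2,3) by blast
  qed
  have both_imp_meets_two: "meets_two e (map Y [1..<p+1])"
    if cut: "meets_two e (cut_off V (map Y js))" and cut': "meets_two e (cut_off V (map Y js'))"
    for e
  proof -
    obtain j j' where "j \<in> set js" "e \<inter> Y j \<noteq> {}" "j' \<in> set js'" "e \<inter> Y j' \<noteq> {}"
      using split_by_part[OF sel(1,3) cut] split_by_part[OF sel(2,4) cut'] by blast
    moreover have "j \<noteq> j'" "j \<in> set [1..<p+1]" "j' \<in> set [1..<p+1]"
      using calculation sel(3-5) by (auto simp del: upt_Suc)
    ultimately show ?thesis
      unfolding meets_two_map_iff[OF distinct_upt] by blast
  qed
  have per_edge: "of_bool (meets_two e (cut_off V (map Y js)))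
                   + of_bool (meets_two e (cut_off V (map Y js')))
      \<le> (of_bool (meets_two e ?P)
          + of_bool (e \<inter> Z \<noteq> {} \<and> meets_two e (map Y [1..<p+1] @ [W]))
          + of_bool (e \<inter> Z = {} \<and> meets_two e (map Y [1..<p+1])) :: nat)"
    if "e \<in># E" for e
    using cut_imp_meets_two[of e js] cut_imp_meets_two[of e js'] both_imp_meets_two[of e]
      meets_two_append[of e "map Y [1..<p+1]" "[W]"] edges that sel
    by (auto simp del: upt_Suc)
  show ?thesis
    unfolding cost_def alpha_def beta_def size_filter_mset_eq_sum_of_bool sum_mset.distrib[symmetric]
    using per_edge by (rule sum_mset_mono)
qed

theorem lemma3p5:
  fixes V :: "'a set" and E :: "'a set multiset"
    and Y :: "nat \<Rightarrow> 'a set" and W Z :: "'a set" and k p :: nat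
  assumes "finite V"
    and "\<forall>e \<in># E. e \<subseteq> V"
    and "k \<ge> 2"
    and "p \<ge> 2 * k - 2"
    and "is_partition V (map Y [1..<p+1] @ [W, Z])"
  shows "\<exists>i :: nat \<Rightarrow> nat. inj_on i {1..k-1} \<and> i ` {1..k-1} \<subseteq> {1..p} \<and>
           2 * cost E (map (\<lambda>j. Y (i j)) [1..<k] @ [V - (\<Union>j\<in>{1..k-1}. Y (i j))])
             \<le> cost E (map Y [1..<p+1] @ [W, Z])
               + alpha E (map Y [1..<p+1]) W Z + beta E (map Y [1..<p+1]) Z"
proof -
  define m where "m = k - 1"
  have k: "k = Suc m" and m: "2 * m \<le> p"
    using assms(3,4) by (simp_all add: m_def)
  let ?rhs = "cost E (map Y [1..<p+1] @ [W, Z])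
               + alpha E (map Y [1..<p+1]) W Z + beta E (map Y [1..<p+1]) Z"
  let ?cut = "\<lambda>i. cut_off V (map Y (map i [1..<k]))"
  have cut_eq: "map (\<lambda>j. Y (i j)) [1..<k] @ [V - (\<Union>j\<in>{1..k-1}. Y (i j))] = ?cut i" for i
    by (simp add: cut_off_def k atLeastLessThanSuc_atLeastAtMost del: upt_Suc)
  define lo hi :: "nat \<Rightarrow> nat" where "lo = (\<lambda>j. j)" and "hi = (\<lambda>j. j + m)"
  have sel: "inj_on i {1..k-1} \<and> i ` {1..k-1} \<subseteq> {1..p}" if "i \<in> {lo, hi}" for i
    using that m by (auto simp: lo_def hi_def m_def)
  have pair: "cost E (?cut lo) + cost E (?cut hi) \<le> ?rhs"
    using m by (intro cost_cut_off_pair_le assms(2,5)) (auto simp: lo_def hi_def k distinct_map)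
  obtain i where i: "i \<in> {lo, hi}" "2 * cost E (?cut i) \<le> ?rhs"
  proof (cases "cost E (?cut lo) \<le> cost E (?cut hi)")
    case True
    then show ?thesis
      using pair that[of lo] by simp
  next
    case False
    then show ?thesis
      using pair that[of hi] by simp
  qed
  show ?thesis
    unfolding cut_eq using sel[OF i(1)] i(2) by blast
qed

end
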